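(* There exist a CSS code $\mathcal C$ on $n$ qupits and a partition $\{1,\dots,n\}=A\sqcup B$ for which $ST_B(\mathcal C)\subsetneq \mathcal C_B$.
   Context: A qupit is $\mathbb{C}^p$, $p$ prime, with basis $\{|a\rangle:a\in\mathbb{Z}_p\}$, and $\mathcal F|a\rangle=\frac1{\sqrt p}\sum_be^{2\pi iab/p}|b\rangle$. For $U\le\mathbb{Z}_p^n$, $U^{(q)}=\mathrm{span}\{|\mathbf u\rangle:\mathbf u\in U\}$. A CSS code is $\mathcal C=V^{(q)}\cap\mathcal F^{\otimes n}W^{(q)}$ for linear codes $V,W\le\mathbb{Z}_p^n$ with $V^\perp\subseteq W$. For $B\subseteq\{1,\dots,n\}$, $V_B=\{\mathbf v:\exists\mathbf w\in V,\ \mathrm{supp}(\mathbf v-\mathbf w)\subseteq B\}$, $W_B$ is defined similarly, and $\mathcal C_B=V_B^{(q)}\cap\mathcal F^{\otimes n}W_B^{(q)}$. A mixed state $\rho'$ is "in" $\mathcal C$ if $\mathrm{Tr}(P_{\mathcal C}\rho')=1$. $ST_B(\mathcal C)=\{\rho:\exists\rho'\text{ in }\mathcal C,\ \mathrm{Tr}_B(\rho)=\mathrm{Tr}_B(\rho')\}$, where $\mathcal H=\mathcal H_A\otimes\mathcal H_B$ with $\mathcal H_A,\mathcal H_B$ the qupits in positions $A$ and $B$. *)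

theory Defs
  imports Complex_Main "HOL-Library.Complex_Order" "HOL-Computational_Algebra.Primes"
begin

text \<open>Qupit positions are indexed by 0..n-1 (standing for 1..n).  A basis string
  (element of Z_p^n) is a function nat => nat with values < p at positions < n
  and value 0 elsewhere.  Vectors of the Hilbert space (C^p)^{\<otimes> n} are
  functions from basis strings to complex numbers supported on the basis strings;
  operators are kernels (matrices) indexed by pairs of basis strings.\<close>

type_synonym bstr = "nat \<Rightarrow> nat"
type_synonym qvec = "bstr \<Rightarrow> complex"
type_synonym qop = "bstr \<Rightarrow> bstr \<Rightarrow> complex"

definition strs :: "nat \<Rightarrow> nat \<Rightarrow> bstr set" where
  "strs p n = {x. (\<forall>i<n. x i < p) \<and> (\<forall>i\<ge>n. x i = 0)}"

definition vadd :: "nat \<Rightarrow> bstr \<Rightarrow> bstr \<Rightarrow> bstr" where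
  "vadd p x y = (\<lambda>i. (x i + y i) mod p)"

definition smul :: "nat \<Rightarrow> nat \<Rightarrow> bstr \<Rightarrow> bstr" where
  "smul p c x = (\<lambda>i. (c * x i) mod p)"

definition lincode :: "nat \<Rightarrow> nat \<Rightarrow> bstr set \<Rightarrow> bool" where
  "lincode p n V \<longleftrightarrow> V \<subseteq> strs p n \<and> (\<lambda>i. 0) \<in> V \<and>
     (\<forall>x\<in>V. \<forall>y\<in>V. vadd p x y \<in> V) \<and> (\<forall>c<p. \<forall>x\<in>V. smul p c x \<in> V)"

definition dual :: "nat \<Rightarrow> nat \<Rightarrow> bstr set \<Rightarrow> bstr set" where
  "dual p n V = {w \<in> strs p n. \<forall>v\<in>V. (\<Sum>i<n. v i * w i) mod p = 0}"

definition extB :: "nat \<Rightarrow> nat \<Rightarrow> nat set \<Rightarrow> bstr set \<Rightarrow> bstr set" where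
  "extB p n B V = {v \<in> strs p n. \<exists>w\<in>V. \<forall>i<n. i \<notin> B \<longrightarrow> v i = w i}"

definition qspan :: "nat \<Rightarrow> nat \<Rightarrow> bstr set \<Rightarrow> qvec set" where
  "qspan p n U = {\<psi>. \<forall>x. x \<notin> U \<longrightarrow> \<psi> x = 0}"

definition qft :: "nat \<Rightarrow> nat \<Rightarrow> qvec \<Rightarrow> qvec" where
  "qft p n \<psi> = (\<lambda>y. if y \<in> strs p n then
      (\<Sum>x\<in>strs p n. \<psi> x * exp (2 * pi * \<i> * of_nat (\<Sum>i<n. x i * y i) / of_nat p))
        / (complex_of_real (sqrt (real p))) ^ n
    else 0)"

definition css :: "nat \<Rightarrow> nat \<Rightarrow> bstr set \<Rightarrow> bstr set \<Rightarrow> qvec set" where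
  "css p n V W = qspan p n V \<inter> qft p n ` qspan p n W"

definition css_B :: "nat \<Rightarrow> nat \<Rightarrow> nat set \<Rightarrow> bstr set \<Rightarrow> bstr set \<Rightarrow> qvec set" where
  "css_B p n B V W = css p n (extB p n B V) (extB p n B W)"

definition apply_op :: "nat \<Rightarrow> nat \<Rightarrow> qop \<Rightarrow> qvec \<Rightarrow> qvec" where
  "apply_op p n P \<psi> = (\<lambda>x. if x \<in> strs p n then (\<Sum>y\<in>strs p n. P x y * \<psi> y) else 0)"

definition supported_op :: "nat \<Rightarrow> nat \<Rightarrow> qop \<Rightarrow> bool" where
  "supported_op p n P \<longleftrightarrow> (\<forall>x y. x \<notin> strs p n \<or> y \<notin> strs p n \<longrightarrow> P x y = 0)"

definition is_proj_onto :: "nat \<Rightarrow> nat \<Rightarrow> qvec set \<Rightarrow> qop \<Rightarrow> bool" where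
  "is_proj_onto p n S P \<longleftrightarrow> supported_op p n P \<and>
     (\<forall>x y. P y x = cnj (P x y)) \<and>
     (\<forall>x\<in>strs p n. \<forall>y\<in>strs p n. (\<Sum>z\<in>strs p n. P x z * P z y) = P x y) \<and>
     (\<forall>\<psi>. apply_op p n P \<psi> \<in> S) \<and>
     (\<forall>\<psi>\<in>S. apply_op p n P \<psi> = \<psi>)"

definition tr :: "nat \<Rightarrow> nat \<Rightarrow> qop \<Rightarrow> complex" where
  "tr p n \<rho> = (\<Sum>x\<in>strs p n. \<rho> x x)"

definition mult_op :: "nat \<Rightarrow> nat \<Rightarrow> qop \<Rightarrow> qop \<Rightarrow> qop" where
  "mult_op p n P Q = (\<lambda>x y. \<Sum>z\<in>strs p n. P x z * Q z y)"

definition density :: "nat \<Rightarrow> nat \<Rightarrow> qop \<Rightarrow> bool" where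
  "density p n \<rho> \<longleftrightarrow> supported_op p n \<rho> \<and>
     (\<forall>v. 0 \<le> (\<Sum>x\<in>strs p n. \<Sum>y\<in>strs p n. cnj (v x) * \<rho> x y * v y)) \<and>
     tr p n \<rho> = 1"

definition state_in :: "nat \<Rightarrow> nat \<Rightarrow> qvec set \<Rightarrow> qop \<Rightarrow> bool" where
  "state_in p n S \<rho> \<longleftrightarrow> density p n \<rho> \<and>
     (\<exists>P. is_proj_onto p n S P \<and> tr p n (mult_op p n P \<rho>) = 1)"

text \<open>Partial trace over the qupits in B: the result is indexed by strings, but only
  depends on their restriction to the complementary positions A.\<close>
definition merge :: "nat set \<Rightarrow> bstr \<Rightarrow> bstr \<Rightarrow> bstr" where
  "merge B x b = (\<lambda>i. if i \<in> B then b i else x i)"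

definition ptrace :: "nat \<Rightarrow> nat \<Rightarrow> nat set \<Rightarrow> qop \<Rightarrow> qop" where
  "ptrace p n B \<rho> = (\<lambda>x y. if x \<in> strs p n \<and> y \<in> strs p n then
      (\<Sum>b\<in>{b \<in> strs p n. \<forall>i. i \<notin> B \<longrightarrow> b i = 0}. \<rho> (merge B x b) (merge B y b))
    else 0)"

definition ST :: "nat \<Rightarrow> nat \<Rightarrow> nat set \<Rightarrow> bstr set \<Rightarrow> bstr set \<Rightarrow> qop set" where
  "ST p n B V W = {\<rho>. density p n \<rho> \<and>
     (\<exists>\<rho>'. state_in p n (css p n V W) \<rho>' \<and> ptrace p n B \<rho> = ptrace p n B \<rho>')}"

end

theory Submission
  imports Defs
begin

(* Take p = 2, n = 2, V = W = {00, 11} and B the second qubit. The code is the line spanned by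
   the Bell vector Phi = |00> + |11>, whereas V_B = W_B = Z_2^2, so C_B is the whole space and
   contains every state. The product state |00><00| is not in ST_B: a state rho with the same
   marginal on the first qubit has <11|rho|11> = 0, so by positivity the coherences between |00>
   and |11> have vanishing real part and Re <Phi|rho|Phi> = <00|rho|00> <= 1, while a state in
   the code satisfies <Phi|rho|Phi> = |Phi|^2 = 2. *)

lemma finite_strs: "finite (strs p n)"
proof -
  have "strs p n = {x. \<forall>i. (i \<in> {..<n} \<longrightarrow> x i \<in> {..<p}) \<and> (i \<notin> {..<n} \<longrightarrow> x i = 0)}"
    unfolding strs_def lessThan_iff not_less by blast
  then show ?thesis
    by (simp only:) (intro finite_set_of_finite_funs finite_lessThan)
qed

lemma sum_sum_delta:
  fixes \<rho> :: "'a \<Rightarrow> 'a \<Rightarrow> complex"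
  assumes "finite S" "x \<in> S" "y \<in> S"
  shows "(\<Sum>u\<in>S. \<Sum>w\<in>S. (if u = x then c else 0) * \<rho> u w * (if w = y then d else 0)) = c * \<rho> x y * d"
proof -
  have "(if u = x then c else 0) * \<rho> u w * (if w = y then d else 0) =
      (if u = x then (if w = y then c * \<rho> x y * d else 0) else 0)" for u w
    by simp
  then show ?thesis
    using assms by (simp add: sum.If_cases)
qed

lemma mult_if_1_0:
  fixes c :: complex
  shows "c * (if b then 1 else 0) = (if b then c else 0)" "(if b then 1 else 0) * c = (if b then c else 0)"
  by simp_all

lemma density_two_point_form:
  assumes "density p n \<rho>" "x \<in> strs p n" "y \<in> strs p n"
  shows "0 \<le> cnj a * a * \<rho> x x + cnj a * b * \<rho> x y + cnj b * a * \<rho> y x + cnj b * b * \<rho> y y"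
proof -
  define \<delta> :: "bstr \<Rightarrow> complex \<Rightarrow> qvec" where "\<delta> z c u = (if u = z then c else 0)" for z c u
  define v :: qvec where "v u = \<delta> x a u + \<delta> y b u" for u
  have expand: "cnj (v u) * \<rho> u w * v w =
      \<delta> x (cnj a) u * \<rho> u w * \<delta> x a w + \<delta> x (cnj a) u * \<rho> u w * \<delta> y b w +
      \<delta> y (cnj b) u * \<rho> u w * \<delta> x a w + \<delta> y (cnj b) u * \<rho> u w * \<delta> y b w" for u w
    by (simp add: v_def \<delta>_def distrib_left distrib_right)
  have "0 \<le> (\<Sum>u\<in>strs p n. \<Sum>w\<in>strs p n. cnj (v u) * \<rho> u w * v w)"
    using assms(1) by (simp add: density_def)
  also have "\<dots> = cnj a * a * \<rho> x x + cnj a * b * \<rho> x y + cnj b * a * \<rho> y x + cnj b * b * \<rho> y y"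
    unfolding expand sum.distrib \<delta>_def
    by (simp only: sum_sum_delta[OF finite_strs] assms(2,3)) (simp add: algebra_simps)
  finally show ?thesis .
qed

lemma density_diag_nonneg:
  assumes "density p n \<rho>" "x \<in> strs p n"
  shows "0 \<le> \<rho> x x"
  using density_two_point_form[OF assms assms(2), of 1 0] by simp

lemma density_diag_le_one:
  assumes "density p n \<rho>" "x \<in> strs p n"
  shows "\<rho> x x \<le> 1"
proof -
  have "\<rho> x x \<le> (\<Sum>z\<in>strs p n. \<rho> z z)"
    using assms density_diag_nonneg by (intro member_le_sum finite_strs) auto
  also have "\<dots> = 1"
    using assms(1) by (simp add: density_def tr_def)
  finally show ?thesis .
qed

lemma density_Re_coherence_eq_0:
  assumes "density p n \<rho>" "x \<in> strs p n" "y \<in> strs p n" "\<rho> y y = 0"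
  shows "Re (\<rho> x y + \<rho> y x) = 0"
proof (rule ccontr)
  define s where "s = Re (\<rho> x y + \<rho> y x)"
  assume "Re (\<rho> x y + \<rho> y x) \<noteq> 0"
  then have "s \<noteq> 0" by (simp add: s_def)
  define t where "t = - (Re (\<rho> x x) + 1) / s"
  have "0 \<le> \<rho> x x + of_real t * (\<rho> x y + \<rho> y x)"
    using density_two_point_form[OF assms(1-3), of 1 "of_real t"] assms(4)
    by (simp add: distrib_left add.assoc)
  then have "0 \<le> Re (\<rho> x x) + t * s"
    by (simp add: less_eq_complex_def s_def)
  moreover have "Re (\<rho> x x) + t * s = -1"
    using \<open>s \<noteq> 0\<close> by (simp add: t_def)
  ultimately show False by simp
qed

lemma apply_op_basis_vector:
  assumes "y \<in> strs p n"
  shows "apply_op p n P (\<lambda>z. if z = y then 1 else 0) = (\<lambda>x. if x \<in> strs p n then P x y else 0)"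
  using assms by (intro ext) (simp add: apply_op_def mult_if_1_0 sum.delta' finite_strs)

lemma proj_column_mem:
  assumes "is_proj_onto p n S P" "y \<in> strs p n"
  shows "(\<lambda>x. if x \<in> strs p n then P x y else 0) \<in> S"
  using assms apply_op_basis_vector[OF assms(2), of P] by (metis is_proj_onto_def)

lemma proj_fixed_vanishes_outside:
  assumes "is_proj_onto p n S P" "\<phi> \<in> S" "x \<notin> strs p n"
  shows "\<phi> x = 0"
proof -
  have "apply_op p n P \<phi> = \<phi>"
    using assms(1,2) by (simp add: is_proj_onto_def)
  then show ?thesis
    using assms(3) by (metis apply_op_def)
qed

lemma proj_onto_line:
  assumes P: "is_proj_onto p n S P"
    and \<phi>: "\<phi> \<in> S" "\<phi> \<noteq> (\<lambda>_. 0)"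
    and line: "\<And>f. f \<in> S \<Longrightarrow> \<exists>c. f = (\<lambda>x. c * \<phi> x)"
    and xy: "x \<in> strs p n" "y \<in> strs p n"
  shows "P x y = \<phi> x * cnj (\<phi> y) / (\<Sum>z\<in>strs p n. cnj (\<phi> z) * \<phi> z)"
proof -
  define N where "N = (\<Sum>z\<in>strs p n. cnj (\<phi> z) * \<phi> z)"
  have herm: "\<And>x y. P y x = cnj (P x y)" and fixed: "apply_op p n P \<phi> = \<phi>"
    using P \<phi>(1) unfolding is_proj_onto_def by blast+
  have "\<exists>c. \<forall>x\<in>strs p n. P x y = c * \<phi> x" if "y \<in> strs p n" for y
    using line[OF proj_column_mem[OF P that]] by metis
  then obtain c where c: "\<And>x y. x \<in> strs p n \<Longrightarrow> y \<in> strs p n \<Longrightarrow> P x y = c y * \<phi> x"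
    by metis
  obtain x0 where x0: "x0 \<in> strs p n" "\<phi> x0 \<noteq> 0"
    using \<phi> proj_fixed_vanishes_outside[OF P \<phi>(1)] by fastforce
  define k where "k = cnj (c x0) / \<phi> x0"
  have P_eq: "P x y = k * \<phi> x * cnj (\<phi> y)" if "x \<in> strs p n" "y \<in> strs p n" for x y
  proof -
    have "c y * \<phi> x0 = P x0 y"
      using c[OF x0(1) that(2)] by simp
    also have "\<dots> = cnj (P y x0)"
      by (rule herm)
    also have "\<dots> = cnj (c x0 * \<phi> y)"
      using c[OF that(2) x0(1)] by simp
    finally have "c y * \<phi> x0 = cnj (c x0 * \<phi> y)" .
    then have "c y = k * cnj (\<phi> y)"
      using x0(2) by (simp add: k_def field_simps)
    then show ?thesis
      using c[OF that] by simp
  qed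
  have "\<phi> x0 = (\<Sum>y\<in>strs p n. P x0 y * \<phi> y)"
    using fun_cong[OF fixed, of x0] x0(1) by (simp add: apply_op_def)
  also have "\<dots> = k * \<phi> x0 * N"
    unfolding N_def sum_distrib_left by (rule sum.cong) (simp_all add: P_eq x0(1) ac_simps)
  finally have "k * N = 1"
    using x0(2) by (simp add: field_simps)
  then have "k = 1 / N"
    by (auto simp: eq_divide_eq)
  then show ?thesis
    using P_eq[OF xy] by (simp add: N_def)
qed

lemma state_in_line_expectation:
  assumes \<rho>: "state_in p n S \<rho>"
    and \<phi>: "\<phi> \<in> S" "\<phi> \<noteq> (\<lambda>_. 0)"
    and line: "\<And>f. f \<in> S \<Longrightarrow> \<exists>c. f = (\<lambda>x. c * \<phi> x)"
  shows "(\<Sum>x\<in>strs p n. \<Sum>y\<in>strs p n. cnj (\<phi> x) * \<rho> x y * \<phi> y) = (\<Sum>z\<in>strs p n. cnj (\<phi> z) * \<phi> z)"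
proof -
  define N where "N = (\<Sum>z\<in>strs p n. cnj (\<phi> z) * \<phi> z)"
  obtain P where P: "is_proj_onto p n S P" and tr1: "tr p n (mult_op p n P \<rho>) = 1"
    using \<rho> by (auto simp: state_in_def)
  have "tr p n (mult_op p n P \<rho>) = (\<Sum>y\<in>strs p n. \<Sum>x\<in>strs p n. \<phi> y * cnj (\<phi> x) / N * \<rho> x y)"
    unfolding tr_def mult_op_def N_def
    by (intro sum.cong refl) (simp add: proj_onto_line[OF P \<phi> line])
  also have "\<dots> = (\<Sum>x\<in>strs p n. \<Sum>y\<in>strs p n. cnj (\<phi> x) * \<rho> x y * \<phi> y) / N"
    by (subst sum.swap) (simp add: sum_divide_distrib ac_simps)
  finally show ?thesis
    using tr1 by (auto simp: N_def divide_eq_eq)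
qed

lemma state_in_full_space:
  assumes "density p n \<rho>"
  shows "state_in p n (qspan p n (strs p n)) \<rho>"
proof -
  define I :: qop where "I x y = (if x \<in> strs p n \<and> x = y then 1 else 0)" for x y
  have apply_I: "apply_op p n I \<psi> = (\<lambda>x. if x \<in> strs p n then \<psi> x else 0)" for \<psi>
    by (intro ext) (simp add: apply_op_def I_def mult_if_1_0 sum.delta finite_strs)
  have "is_proj_onto p n (qspan p n (strs p n)) I"
    unfolding is_proj_onto_def supported_op_def
    by (auto simp: I_def apply_I qspan_def mult_if_1_0 finite_strs)
  moreover have "tr p n (mult_op p n I \<rho>) = tr p n \<rho>"
    unfolding tr_def mult_op_def by (intro sum.cong refl) (simp add: I_def mult_if_1_0 finite_strs)
  ultimately show ?thesis
    using assms by (auto simp: state_in_def density_def)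
qed

lemma density_basis_state:
  assumes "x \<in> strs p n"
  shows "density p n (\<lambda>u v. if u = x \<and> v = x then 1 else 0)"
  unfolding density_def
proof (intro conjI allI)
  fix v :: qvec
  have "(\<Sum>u\<in>strs p n. \<Sum>w\<in>strs p n. cnj (v u) * (if u = x \<and> w = x then 1 else 0) * v w)
      = cnj (v x) * v x"
  proof -
    have "cnj (v u) * (if u = x \<and> w = x then 1 else 0) * v w =
        (if u = x then if w = x then cnj (v x) * v x else 0 else 0)" for u w
      by simp
    then show ?thesis
      using assms finite_strs by (simp add: sum.If_cases)
  qed
  also have "\<dots> \<ge> 0"
    by (simp add: less_eq_complex_def)
  finally show "0 \<le> (\<Sum>u\<in>strs p n. \<Sum>w\<in>strs p n. cnj (v u) * (if u = x \<and> w = x then 1 else 0) * v w)" .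
qed (use assms in \<open>auto simp: supported_op_def tr_def finite_strs\<close>)

definition bits :: "nat \<Rightarrow> nat \<Rightarrow> bstr" where
  "bits a b = (\<lambda>i. if i = 0 then a else if i = 1 then b else 0)"

lemma bits_eq_iff [simp]: "bits a b = bits c d \<longleftrightarrow> a = c \<and> b = d"
  by (auto simp: bits_def fun_eq_iff)

lemma bits_apply [simp]: "bits a b 0 = a" "bits a b (Suc 0) = b" "bits a b (Suc (Suc i)) = 0"
  by (auto simp: bits_def)

lemma strs_2_2: "strs 2 2 = {bits 0 0, bits 0 1, bits 1 0, bits 1 1}"
proof (intro set_eqI iffI)
  fix x assume "x \<in> strs 2 2"
  then have x: "x 0 < 2" "x 1 < 2" "\<And>i. i \<ge> 2 \<Longrightarrow> x i = 0"
    by (auto simp: strs_def)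
  then have "x = bits (x 0) (x 1)"
    by (auto simp: bits_def fun_eq_iff)
  moreover have "x 0 = 0 \<or> x 0 = 1" "x 1 = 0 \<or> x 1 = 1"
    using x(1,2) by auto
  ultimately show "x \<in> {bits 0 0, bits 0 1, bits 1 0, bits 1 1}"
    by auto
qed (auto simp: strs_def bits_def)

lemma sum_strs_2_2: "sum f (strs 2 2) = f (bits 0 0) + f (bits 0 1) + f (bits 1 0) + f (bits 1 1)"
  unfolding strs_2_2 by (simp add: algebra_simps)

lemma qft_in_qspan_strs: "qft p n \<psi> \<in> qspan p n (strs p n)"
  by (simp add: qspan_def qft_def)

lemma qft_2_2_bits:
  assumes "c < 2" "d < 2"
  shows "qft 2 2 \<psi> (bits c d) = (\<psi> (bits 0 0) + \<psi> (bits 0 1) * (-1) ^ d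
    + \<psi> (bits 1 0) * (-1) ^ c + \<psi> (bits 1 1) * (-1) ^ (c + d)) / 2"
proof -
  have sign: "exp (2 * pi * \<i> * of_nat k / of_nat 2) = (-1::complex) ^ k" for k
  proof -
    have "2 * pi * \<i> * of_nat k / of_nat 2 = of_nat k * (of_real pi * \<i>)"
      by simp
    then show ?thesis
      by (simp only: exp_of_nat_mult exp_pi_i)
  qed
  have inner: "(\<Sum>i<2. x i * bits c d i) = x 0 * c + x 1 * d" for x
    by (simp add: numeral_2_eq_2)
  have norm: "(complex_of_real (sqrt (real 2))) ^ 2 = 2"
    by (metis of_real_numeral of_real_power of_nat_numeral real_sqrt_pow2 zero_le_numeral)
  have "bits c d \<in> strs 2 2"
    using assms by (simp add: strs_def bits_def)
  then have "qft 2 2 \<psi> (bits c d) = (\<Sum>x\<in>strs 2 2. \<psi> x * (-1) ^ (x 0 * c + x 1 * d)) / 2"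
    unfolding qft_def inner norm sign by simp
  then show ?thesis
    by (simp add: sum_strs_2_2)
qed

lemma qft_2_2_involution:
  assumes "\<phi> \<in> qspan 2 2 (strs 2 2)"
  shows "qft 2 2 (qft 2 2 \<phi>) = \<phi>"
proof
  fix y
  show "qft 2 2 (qft 2 2 \<phi>) y = \<phi> y"
  proof (cases "y \<in> strs 2 2")
    case True
    then show ?thesis
      unfolding strs_2_2 by (auto simp: qft_2_2_bits field_simps)
  next
    case False
    then show ?thesis
      using assms by (simp add: qft_def qspan_def)
  qed
qed

lemma qft_2_2_image: "qft 2 2 ` qspan 2 2 (strs 2 2) = qspan 2 2 (strs 2 2)"
  using qft_in_qspan_strs qft_2_2_involution by (metis image_eqI image_subsetI subsetI subset_antisym)

definition bell_code :: "bstr set" where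
  "bell_code = {bits 0 0, bits 1 1}"

definition bell :: qvec where
  "bell x = (if x \<in> bell_code then 1 else 0)"

lemma lincode_bell_code: "lincode 2 2 bell_code"
proof -
  have vadd: "vadd 2 (bits a b) (bits c d) = bits ((a + c) mod 2) ((b + d) mod 2)" for a b c d
    by (auto simp: vadd_def bits_def)
  have smul: "smul 2 k (bits a b) = bits ((k * a) mod 2) ((k * b) mod 2)" for k a b
    by (auto simp: smul_def bits_def)
  have zero: "(\<lambda>i. 0) = bits 0 0"
    by (auto simp: bits_def)
  have "k < 2 \<Longrightarrow> k = 0 \<or> k = 1" for k :: nat
    by auto
  then show ?thesis
    unfolding lincode_def bell_code_def
    by (auto simp: vadd smul strs_2_2 zero)
qed

lemma dual_bell_code_subset: "dual 2 2 bell_code \<subseteq> bell_code"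
proof
  fix w assume "w \<in> dual 2 2 bell_code"
  then have w: "w \<in> strs 2 2" "(\<Sum>i<2. bits 1 1 i * w i) mod 2 = 0"
    by (auto simp: dual_def bell_code_def)
  then have "(w 0 + w 1) mod 2 = 0"
    by (simp add: numeral_2_eq_2)
  with w(1) show "w \<in> bell_code"
    unfolding strs_2_2 bell_code_def by auto
qed

lemma extB_bell_code: "extB 2 2 {1} bell_code = strs 2 2"
proof (intro set_eqI iffI)
  fix v assume "v \<in> strs 2 2"
  then show "v \<in> extB 2 2 {1} bell_code"
    unfolding extB_def bell_code_def strs_2_2 by (auto simp: bits_def)
qed (simp add: extB_def)

lemma css_B_bell_code: "css_B 2 2 {1} bell_code bell_code = qspan 2 2 (strs 2 2)"
  unfolding css_B_def css_def extB_bell_code qft_2_2_image by simp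

lemma bell_in_css: "bell \<in> css 2 2 bell_code bell_code"
proof -
  have "bell \<in> qspan 2 2 bell_code"
    by (simp add: qspan_def bell_def)
  moreover have "qft 2 2 bell = bell"
  proof
    fix y
    show "qft 2 2 bell y = bell y"
    proof (cases "y \<in> strs 2 2")
      case True
      then show ?thesis
        unfolding strs_2_2 by (auto simp: qft_2_2_bits bell_def bell_code_def)
    next
      case False
      then have "y \<notin> bell_code"
        by (auto simp: bell_code_def strs_2_2)
      with False show ?thesis
        by (simp add: qft_def bell_def)
    qed
  qed
  ultimately show ?thesis
    unfolding css_def by (metis IntI image_eqI)
qed

lemma css_bell_code_line:
  assumes "f \<in> css 2 2 bell_code bell_code"
  shows "f = (\<lambda>x. f (bits 0 0) * bell x)"
proof -
  obtain \<psi> where f: "f \<in> qspan 2 2 bell_code" and \<psi>: "\<psi> \<in> qspan 2 2 bell_code" "f = qft 2 2 \<psi>"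
    using assms by (auto simp: css_def)
  have "\<psi> (bits 0 1) = 0" "\<psi> (bits 1 0) = 0"
    using \<psi>(1) by (auto simp: qspan_def bell_code_def)
  then have "f (bits 1 1) = f (bits 0 0)"
    using \<psi>(2) by (simp add: qft_2_2_bits)
  then show ?thesis
    using f by (auto simp: qspan_def bell_def bell_code_def)
qed

lemma state_in_bell_code:
  assumes "state_in 2 2 (css 2 2 bell_code bell_code) \<rho>"
  shows "\<rho> (bits 0 0) (bits 0 0) + \<rho> (bits 0 0) (bits 1 1) + \<rho> (bits 1 1) (bits 0 0)
    + \<rho> (bits 1 1) (bits 1 1) = 2"
proof -
  have "bell \<noteq> (\<lambda>_. 0)"
    by (metis bell_def bell_code_def insertI1 zero_neq_one)
  then have "(\<Sum>x\<in>strs 2 2. \<Sum>y\<in>strs 2 2. cnj (bell x) * \<rho> x y * bell y) = (\<Sum>z\<in>strs 2 2. cnj (bell z) * bell z)"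
    using state_in_line_expectation[OF assms bell_in_css] css_bell_code_line by blast
  then show ?thesis
    by (simp add: sum_strs_2_2 bell_def bell_code_def add.assoc)
qed

lemma ptrace_second_qubit:
  "ptrace 2 2 {1} \<rho> (bits 1 0) (bits 1 0) = \<rho> (bits 1 0) (bits 1 0) + \<rho> (bits 1 1) (bits 1 1)"
proof -
  have traced: "{b \<in> strs 2 2. \<forall>i. i \<notin> {1} \<longrightarrow> b i = 0} = {bits 0 0, bits 0 1}"
    by (auto simp: strs_2_2 bits_def)
  have "merge {1} (bits 1 0) (bits 0 0) = bits 1 0" "merge {1} (bits 1 0) (bits 0 1) = bits 1 1"
    by (auto simp: merge_def bits_def)
  then show ?thesis
    unfolding ptrace_def traced by (simp add: strs_2_2)
qed

lemma basis_state_not_in_ST: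
  "(\<lambda>u v. if u = bits 0 0 \<and> v = bits 0 0 then 1 else 0) \<notin> ST 2 2 {1} bell_code bell_code"
proof
  define \<rho>0 :: qop where "\<rho>0 u v = (if u = bits 0 0 \<and> v = bits 0 0 then 1 else 0)" for u v
  assume "(\<lambda>u v. if u = bits 0 0 \<and> v = bits 0 0 then 1 else 0) \<in> ST 2 2 {1} bell_code bell_code"
  then obtain \<rho> where \<rho>: "state_in 2 2 (css 2 2 bell_code bell_code) \<rho>"
    and same_marginal: "ptrace 2 2 {1} \<rho>0 = ptrace 2 2 {1} \<rho>"
    unfolding ST_def \<rho>0_def by auto
  have density: "density 2 2 \<rho>"
    using \<rho> by (simp add: state_in_def)
  have "\<rho> (bits 1 0) (bits 1 0) + \<rho> (bits 1 1) (bits 1 1) = 0"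
    using ptrace_second_qubit[of \<rho>] ptrace_second_qubit[of \<rho>0] same_marginal
    by (simp add: \<rho>0_def)
  then have "\<rho> (bits 1 1) (bits 1 1) = 0"
    using density_diag_nonneg[OF density] by (simp add: add_nonneg_eq_0_iff strs_2_2)
  then have coherence: "Re (\<rho> (bits 0 0) (bits 1 1) + \<rho> (bits 1 1) (bits 0 0)) = 0"
    using density_Re_coherence_eq_0[OF density] by (simp add: strs_2_2)
  have "\<rho> (bits 0 0) (bits 0 0) + (\<rho> (bits 0 0) (bits 1 1) + \<rho> (bits 1 1) (bits 0 0)) = 2"
    using state_in_bell_code[OF \<rho>] \<open>\<rho> (bits 1 1) (bits 1 1) = 0\<close> by (simp add: add.assoc)
  then have "Re (\<rho> (bits 0 0) (bits 0 0)) + Re (\<rho> (bits 0 0) (bits 1 1) + \<rho> (bits 1 1) (bits 0 0)) = 2"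
    by (metis plus_complex.sel(1) complex_Re_numeral)
  then have "Re (\<rho> (bits 0 0) (bits 0 0)) = 2"
    using coherence by simp
  moreover have "\<rho> (bits 0 0) (bits 0 0) \<le> 1"
    using density_diag_le_one[OF density] by (simp add: strs_2_2)
  ultimately show False
    by (simp add: less_eq_complex_def)
qed

lemma ST_bell_code_psubset:
  "ST 2 2 {1} bell_code bell_code \<subset> {\<rho>. state_in 2 2 (css_B 2 2 {1} bell_code bell_code) \<rho>}"
proof -
  have full: "{\<rho>. state_in 2 2 (css_B 2 2 {1} bell_code bell_code) \<rho>} = {\<rho>. density 2 2 \<rho>}"
    using state_in_full_space unfolding state_in_def css_B_bell_code by blast
  have "ST 2 2 {1} bell_code bell_code \<subseteq> {\<rho>. density 2 2 \<rho>}"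
    by (auto simp: ST_def)
  moreover have "(\<lambda>u v. if u = bits 0 0 \<and> v = bits 0 0 then 1 else 0)
      \<in> {\<rho>. density 2 2 \<rho>} - ST 2 2 {1} bell_code bell_code"
    using density_basis_state[of "bits 0 0"] basis_state_not_in_ST by (simp add: strs_2_2)
  ultimately show ?thesis
    unfolding full by blast
qed

theorem mainTheorem10:
  shows "\<exists>(p::nat) (n::nat) V W (A::nat set) (B::nat set).
    prime p \<and> lincode p n V \<and> lincode p n W \<and> dual p n V \<subseteq> W \<and>
    A \<union> B = {..<n} \<and> A \<inter> B = {} \<and>
    ST p n B V W \<subset> {\<rho>. state_in p n (css_B p n B V W) \<rho>}"
proof -
  have "prime (2::nat)" "{0} \<union> {1} = {..<2::nat}" "{0} \<inter> {1::nat} = {}"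
    by auto
  then show ?thesis
    using lincode_bell_code dual_bell_code_subset ST_bell_code_psubset by blast
qed

end
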